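(* Let $\mathfrak g\xrightarrow{\mu}\mathfrak h$ be a crossed module of Lie algebras with action $\mathcal L$. Let $(\omega,\varphi)$ and $(\omega',\varphi')$ be pairs in $\bigwedge^2\mathfrak h^*\oplus(\mathfrak g\oplus\mathfrak h)^*$, each satisfying the cocycle conditions (1)–(3) below. Suppose there is $\psi\in\mathfrak h^*$ with $\omega(y_0,y_1)-\omega'(y_0,y_1)=-\psi([y_0,y_1])$ for all $y_0,y_1\in\mathfrak h$ and $\varphi(x,y)-\varphi'(x,y)=\psi(\mu(x))$ for all $(x,y)\in\mathfrak g\oplus\mathfrak h$. Then the induced extensions are isomorphic: the map $\mathfrak h\oplus^\omega\mathbb R\to\mathfrak h\oplus^{\omega'}\mathbb R$, $(y,\lambda)\mapsto(y,\lambda-\psi(y))$, together with the identity of $\mathfrak g$, is an isomorphism of crossed modules from $\mathfrak g\xrightarrow{\mu_\varphi}\mathfrak h\oplus^\omega\mathbb R$ to $\mathfrak g\xrightarrow{\mu_{\varphi'}}\mathfrak h\oplus^{\omega'}\mathbb R$ compatible with the inclusions of $\mathbb R$ and the projections to $\mathfrak h$.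
   Context: A crossed module of Lie algebras: Lie algebras $\mathfrak g,\mathfrak h$, Lie homomorphism $\mu:\mathfrak g\to\mathfrak h$, Lie homomorphism $\mathcal L:\mathfrak h\to\mathrm{Der}(\mathfrak g)$ with $\mu(\mathcal L_yx)=[y,\mu(x)]$, $\mathcal L_{\mu(x_0)}x_1=[x_0,x_1]$. $[(x_0,y_0),(x_1,y_1)]_{\mathcal L}=([x_0,x_1]+\mathcal L_{y_0}x_1-\mathcal L_{y_1}x_0,[y_0,y_1])$. Cocycle conditions for $(\omega,\varphi)$: (1) $-\omega([y_0,y_1],y_2)+\omega([y_0,y_2],y_1)-\omega([y_1,y_2],y_0)=0$; (2) $\varphi(x_2,y)-\varphi(x_1+x_2,y)+\varphi(x_1,y+\mu(x_2))=0$; (3) $\omega(y_0,y_1)-\omega(y_0+\mu(x_0),y_1+\mu(x_1))=\varphi([(x_0,y_0),(x_1,y_1)]_{\mathcal L})$. $\mathfrak h\oplus^\omega\mathbb R$ is $\mathfrak h\oplus\mathbb R$ with bracket $[(y_0,\lambda_0),(y_1,\lambda_1)]_\omega=([y_0,y_1],-\omega(y_0,y_1))$. The induced extension of $(\omega,\varphi)$ is the crossed module $\mu_\varphi:\mathfrak g\to\mathfrak h\oplus^\omega\mathbb R$, $x\mapsto(\mu(x),\varphi(x,0))$, with action $\mathcal L_{(y,\lambda)}x=\mathcal L_yx$, sitting in the short exact sequence of crossed modules $0\to(0\to\mathbb R)\to(\mathfrak g\xrightarrow{\mu_\varphi}\mathfrak h\oplus^\omega\mathbb R)\to(\mathfrak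 g\xrightarrow{\mu}\mathfrak h)\to0$ (identity on $\mathfrak g$, inclusion $\lambda\mapsto(0,\lambda)$, projection $(y,\lambda)\mapsto y$). An isomorphism of crossed modules is a pair of Lie algebra isomorphisms commuting with the structure maps and intertwining the actions. *)

theory Defs
  imports "HOL-Analysis.Analysis"
begin

definition bilinear_map :: "('a::real_vector \<Rightarrow> 'b::real_vector \<Rightarrow> 'c::real_vector) \<Rightarrow> bool" where
  "bilinear_map b \<longleftrightarrow> (\<forall>x. linear (b x)) \<and> (\<forall>y. linear (\<lambda>x. b x y))"

definition lie_algebra :: "('a::real_vector \<Rightarrow> 'a \<Rightarrow> 'a) \<Rightarrow> bool" where
  "lie_algebra br \<longleftrightarrow> bilinear_map br \<and> (\<forall>x. br x x = 0) \<and>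
     (\<forall>x y z. br x (br y z) + br y (br z x) + br z (br x y) = 0)"

definition lie_hom :: "('a::real_vector \<Rightarrow> 'a \<Rightarrow> 'a) \<Rightarrow> ('b::real_vector \<Rightarrow> 'b \<Rightarrow> 'b) \<Rightarrow> ('a \<Rightarrow> 'b) \<Rightarrow> bool" where
  "lie_hom brA brB f \<longleftrightarrow> linear f \<and> (\<forall>x y. f (brA x y) = brB (f x) (f y))"

definition lie_iso :: "('a::real_vector \<Rightarrow> 'a \<Rightarrow> 'a) \<Rightarrow> ('b::real_vector \<Rightarrow> 'b \<Rightarrow> 'b) \<Rightarrow> ('a \<Rightarrow> 'b) \<Rightarrow> bool" where
  "lie_iso brA brB f \<longleftrightarrow> lie_hom brA brB f \<and> bij f"

definition derivation :: "('a::real_vector \<Rightarrow> 'a \<Rightarrow> 'a) \<Rightarrow> ('a \<Rightarrow> 'a) \<Rightarrow> bool" where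
  "derivation br D \<longleftrightarrow> linear D \<and> (\<forall>x y. D (br x y) = br (D x) y + br x (D y))"

definition crossed_module ::
  "('g::real_vector \<Rightarrow> 'g \<Rightarrow> 'g) \<Rightarrow> ('h::real_vector \<Rightarrow> 'h \<Rightarrow> 'h) \<Rightarrow> ('g \<Rightarrow> 'h) \<Rightarrow> ('h \<Rightarrow> 'g \<Rightarrow> 'g) \<Rightarrow> bool" where
  "crossed_module brg brh \<mu> L \<longleftrightarrow>
     lie_algebra brg \<and> lie_algebra brh \<and> lie_hom brg brh \<mu> \<and>
     (\<forall>y. derivation brg (L y)) \<and> (\<forall>x. linear (\<lambda>y. L y x)) \<and>
     (\<forall>y0 y1 x. L (brh y0 y1) x = L y0 (L y1 x) - L y1 (L y0 x)) \<and>
     (\<forall>y x. \<mu> (L y x) = brh y (\<mu> x)) \<and>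
     (\<forall>x0 x1. L (\<mu> x0) x1 = brg x0 x1)"

definition crossed_module_iso ::
  "('g::real_vector \<Rightarrow> 'g \<Rightarrow> 'g) \<Rightarrow> ('h::real_vector \<Rightarrow> 'h \<Rightarrow> 'h) \<Rightarrow> ('g \<Rightarrow> 'h) \<Rightarrow> ('h \<Rightarrow> 'g \<Rightarrow> 'g) \<Rightarrow>
   ('g2::real_vector \<Rightarrow> 'g2 \<Rightarrow> 'g2) \<Rightarrow> ('h2::real_vector \<Rightarrow> 'h2 \<Rightarrow> 'h2) \<Rightarrow> ('g2 \<Rightarrow> 'h2) \<Rightarrow> ('h2 \<Rightarrow> 'g2 \<Rightarrow> 'g2) \<Rightarrow>
   ('g \<Rightarrow> 'g2) \<Rightarrow> ('h \<Rightarrow> 'h2) \<Rightarrow> bool" where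
  "crossed_module_iso brg brh \<mu> L brg' brh' \<mu>' L' f F \<longleftrightarrow>
     lie_iso brg brg' f \<and> lie_iso brh brh' F \<and>
     (\<forall>x. \<mu>' (f x) = F (\<mu> x)) \<and>
     (\<forall>y x. f (L y x) = L' (F y) (f x))"

definition semidirect_bracket ::
  "('g::real_vector \<Rightarrow> 'g \<Rightarrow> 'g) \<Rightarrow> ('h::real_vector \<Rightarrow> 'h \<Rightarrow> 'h) \<Rightarrow> ('h \<Rightarrow> 'g \<Rightarrow> 'g) \<Rightarrow>
   'g \<times> 'h \<Rightarrow> 'g \<times> 'h \<Rightarrow> 'g \<times> 'h" where
  "semidirect_bracket brg brh L p q =
     (brg (fst p) (fst q) + L (snd p) (fst q) - L (snd q) (fst p), brh (snd p) (snd q))"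

definition cocycle ::
  "('g::real_vector \<Rightarrow> 'g \<Rightarrow> 'g) \<Rightarrow> ('h::real_vector \<Rightarrow> 'h \<Rightarrow> 'h) \<Rightarrow> ('g \<Rightarrow> 'h) \<Rightarrow> ('h \<Rightarrow> 'g \<Rightarrow> 'g) \<Rightarrow>
   ('h \<Rightarrow> 'h \<Rightarrow> real) \<Rightarrow> ('g \<times> 'h \<Rightarrow> real) \<Rightarrow> bool" where
  "cocycle brg brh \<mu> L \<omega> \<phi> \<longleftrightarrow>
     bilinear_map \<omega> \<and> (\<forall>y. \<omega> y y = 0) \<and> linear \<phi> \<and>
     (\<forall>y0 y1 y2. - \<omega> (brh y0 y1) y2 + \<omega> (brh y0 y2) y1 - \<omega> (brh y1 y2) y0 = 0) \<and>
     (\<forall>x1 x2 y. \<phi> (x2, y) - \<phi> (x1 + x2, y) + \<phi> (x1, y + \<mu> x2) = 0) \<and>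
     (\<forall>x0 y0 x1 y1. \<omega> y0 y1 - \<omega> (y0 + \<mu> x0) (y1 + \<mu> x1) =
        \<phi> (semidirect_bracket brg brh L (x0, y0) (x1, y1)))"

definition omega_bracket :: "('h::real_vector \<Rightarrow> 'h \<Rightarrow> 'h) \<Rightarrow> ('h \<Rightarrow> 'h \<Rightarrow> real) \<Rightarrow>
   'h \<times> real \<Rightarrow> 'h \<times> real \<Rightarrow> 'h \<times> real" where
  "omega_bracket brh \<omega> p q = (brh (fst p) (fst q), - \<omega> (fst p) (fst q))"

definition ext_mu :: "('g::real_vector \<Rightarrow> 'h::real_vector) \<Rightarrow> ('g \<times> 'h \<Rightarrow> real) \<Rightarrow> 'g \<Rightarrow> 'h \<times> real" where
  "ext_mu \<mu> \<phi> x = (\<mu> x, \<phi> (x, 0))"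

definition ext_action :: "('h \<Rightarrow> 'g \<Rightarrow> 'g) \<Rightarrow> 'h \<times> real \<Rightarrow> 'g \<Rightarrow> 'g" where
  "ext_action L p x = L (fst p) x"

end

theory Submission
  imports Defs
begin

text \<open>Conditions (1) and (3) make \<open>h \<oplus>\<^sup>\<omega> \<real>\<close> a Lie algebra and \<open>\<mu>\<^sub>\<phi>\<close> an equivariant Lie
  homomorphism into it; the induced extension is therefore a crossed module. If the pairs differ
  by the coboundary of \<open>\<psi>\<close>, the shear \<open>(y, \<lambda>) \<mapsto> (y, \<lambda> - \<psi> y)\<close> transports the bracket twisted
  by \<open>\<omega>\<close> to the one twisted by \<open>\<omega>'\<close> and \<open>\<mu>\<^sub>\<phi>\<close> to \<open>\<mu>\<^sub>\<phi>\<^sub>'\<close>, while it is the identity on the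
  central \<open>\<real>\<close> and on the \<open>h\<close>-component, and the actions only see that component.\<close>

lemma bilinear_map_iff_bilinear: "bilinear_map b \<longleftrightarrow> bilinear b"
  by (simp add: bilinear_map_def bilinear_def)

lemma bilinear_alternating_antisym:
  assumes b: "bilinear b" and alt: "\<And>y. b y y = 0"
  shows "b x y = - b y x"
proof -
  have "0 = b (x + y) (x + y)" using alt by simp
  also have "\<dots> = b x x + b x y + (b y x + b y y)"
    using b by (simp add: bilinear_ladd bilinear_radd)
  finally show ?thesis using alt by (simp add: eq_neg_iff_add_eq_0)
qed

lemma lie_algebra_omega_bracket:
  assumes lie: "lie_algebra brh" and bil: "bilinear_map \<omega>" and alt: "\<And>y. \<omega> y y = 0"
    and cyc: "\<And>y0 y1 y2. - \<omega> (brh y0 y1) y2 + \<omega> (brh y0 y2) y1 - \<omega> (brh y1 y2) y0 = 0"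
  shows "lie_algebra (omega_bracket brh \<omega>)"
proof -
  have bh: "bilinear brh" and jac: "\<And>x y z. brh x (brh y z) + brh y (brh z x) + brh z (brh x y) = 0"
    and alth: "\<And>x. brh x x = 0"
    using lie by (auto simp: lie_algebra_def bilinear_map_iff_bilinear)
  have bw: "bilinear \<omega>" using bil by (simp add: bilinear_map_iff_bilinear)
  have \<omega>_cyclic: "\<omega> x (brh y z) + \<omega> y (brh z x) + \<omega> z (brh x y) = 0" for x y z
  proof -
    have "\<omega> x (brh y z) + \<omega> y (brh z x) + \<omega> z (brh x y)
        = - \<omega> (brh y z) x + \<omega> (brh x z) y - \<omega> (brh x y) z"
      using bilinear_alternating_antisym[OF bw alt, of x "brh y z"]
        bilinear_alternating_antisym[OF bw alt, of y "brh z x"]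
        bilinear_alternating_antisym[OF bw alt, of z "brh x y"]
        bilinear_alternating_antisym[OF bh alth, of z x] bilinear_lneg[OF bw, of "brh x z" y]
      by simp
    also have "\<dots> = 0" using cyc[of x y z] by simp
    finally show ?thesis .
  qed
  have "omega_bracket brh \<omega> x (omega_bracket brh \<omega> y z)
      + omega_bracket brh \<omega> y (omega_bracket brh \<omega> z x)
      + omega_bracket brh \<omega> z (omega_bracket brh \<omega> x y) = 0" for x y z
    using jac \<omega>_cyclic[of "fst x" "fst y" "fst z"]
    by (simp add: omega_bracket_def prod_eq_iff)
  moreover have "bilinear_map (omega_bracket brh \<omega>)"
    using bh bw unfolding bilinear_map_def omega_bracket_def
    by (auto intro!: linearI simp: prod_eq_iff bilinear_ladd bilinear_radd bilinear_lmul bilinear_rmul)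
  ultimately show ?thesis
    using alt alth by (simp add: lie_algebra_def omega_bracket_def zero_prod_def)
qed

lemma cocycle_phi_bracket:
  assumes cm: "crossed_module brg brh \<mu> L" and c: "cocycle brg brh \<mu> L \<omega> \<phi>"
  shows "\<phi> (brg x0 x1, 0) = - \<omega> (\<mu> x0) (\<mu> x1)"
proof -
  have "L 0 x = 0" for x
    using cm linear_0[of "\<lambda>y. L y x"] by (simp add: crossed_module_def)
  moreover have "brh 0 0 = 0" and "\<omega> 0 0 = 0"
    using cm c by (simp_all add: crossed_module_def lie_algebra_def cocycle_def)
  moreover have "\<omega> 0 0 - \<omega> (0 + \<mu> x0) (0 + \<mu> x1) = \<phi> (semidirect_bracket brg brh L (x0, 0) (x1, 0))"
    using c unfolding cocycle_def by blast
  ultimately show ?thesis by (simp add: semidirect_bracket_def)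
qed

lemma cocycle_phi_action:
  assumes cm: "crossed_module brg brh \<mu> L" and c: "cocycle brg brh \<mu> L \<omega> \<phi>"
  shows "\<phi> (L y x, 0) = - \<omega> y (\<mu> x)"
proof -
  have "bilinear brg" "bilinear brh" "bilinear \<omega>" "linear \<mu>" "linear (L 0)"
    using cm c by (auto simp: crossed_module_def lie_algebra_def cocycle_def lie_hom_def
        derivation_def bilinear_map_iff_bilinear)
  then have "brg 0 x = 0" "brh y 0 = 0" "\<omega> y 0 = 0" "\<mu> 0 = 0" "L 0 0 = 0"
    by (simp_all add: bilinear_lzero bilinear_rzero linear_0)
  moreover have "\<omega> y 0 - \<omega> (y + \<mu> 0) (0 + \<mu> x) = \<phi> (semidirect_bracket brg brh L (0, y) (x, 0))"
    using c unfolding cocycle_def by blast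
  ultimately show ?thesis by (simp add: semidirect_bracket_def)
qed

lemma linear_ext_mu:
  assumes "linear \<mu>" and "linear \<phi>"
  shows "linear (ext_mu \<mu> \<phi>)"
  using assms linear_add[OF assms(2), of "(_, 0)" "(_, 0)"] linear_scale[OF assms(2), of _ "(_, 0)"]
  by (intro linearI) (simp_all add: ext_mu_def linear_add linear_scale)

lemma ext_action_eq: "ext_action L p = L (fst p)"
  by (simp add: ext_action_def fun_eq_iff)

lemma crossed_module_induced_extension:
  assumes cm: "crossed_module brg brh \<mu> L" and c: "cocycle brg brh \<mu> L \<omega> \<phi>"
  shows "crossed_module brg (omega_bracket brh \<omega>) (ext_mu \<mu> \<phi>) (ext_action L)"
proof -
  have lie_g: "lie_algebra brg" and lie_h: "lie_algebra brh" and hom: "lie_hom brg brh \<mu>"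
    and der: "\<forall>y. derivation brg (L y)" and lin_act: "\<forall>x. linear (\<lambda>y. L y x)"
    and act_hom: "\<forall>y0 y1 x. L (brh y0 y1) x = L y0 (L y1 x) - L y1 (L y0 x)"
    and equiv: "\<forall>y x. \<mu> (L y x) = brh y (\<mu> x)" and peiffer: "\<forall>x0 x1. L (\<mu> x0) x1 = brg x0 x1"
    using cm by (simp_all add: crossed_module_def)
  have "lie_algebra (omega_bracket brh \<omega>)"
    using c lie_h by (intro lie_algebra_omega_bracket) (simp_all add: cocycle_def)
  moreover have "lie_hom brg (omega_bracket brh \<omega>) (ext_mu \<mu> \<phi>)"
    using hom c linear_ext_mu[of \<mu> \<phi>] cocycle_phi_bracket[OF cm c]
    by (simp add: lie_hom_def cocycle_def ext_mu_def omega_bracket_def)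
  moreover have "linear (\<lambda>p. ext_action L p x)" for x
    using lin_act linear_compose[OF linear_fst, of "\<lambda>y. L y x"]
    by (simp add: ext_action_eq o_def)
  ultimately show ?thesis
    using lie_g der act_hom equiv peiffer cocycle_phi_action[OF cm c]
    by (simp add: crossed_module_def ext_action_eq ext_mu_def omega_bracket_def)
qed

lemma lie_iso_omega_bracket_shear:
  assumes lin: "linear \<psi>" and h\<omega>: "\<And>y0 y1. \<omega> y0 y1 - \<omega>' y0 y1 = - \<psi> (brh y0 y1)"
  shows "lie_iso (omega_bracket brh \<omega>) (omega_bracket brh \<omega>') (\<lambda>(y, t). (y, t - \<psi> y))"
proof -
  let ?F = "\<lambda>(y, t). (y, t - \<psi> y)"
  have "linear ?F"
    by (intro linearI) (auto simp: linear_add[OF lin] linear_scale[OF lin] algebra_simps)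
  moreover have "?F (omega_bracket brh \<omega> p q) = omega_bracket brh \<omega>' (?F p) (?F q)" for p q
    using h\<omega>[of "fst p" "fst q"] by (simp add: omega_bracket_def split_beta)
  moreover have "bij ?F"
    by (rule bij_betw_byWitness[where f' = "\<lambda>(y, t). (y, t + \<psi> y)"]) auto
  ultimately show ?thesis by (simp add: lie_iso_def lie_hom_def)
qed

lemma crossed_module_iso_induced_extensions:
  assumes lin: "linear \<psi>" and h\<omega>: "\<And>y0 y1. \<omega> y0 y1 - \<omega>' y0 y1 = - \<psi> (brh y0 y1)"
    and h\<phi>: "\<And>x. \<phi> (x, 0) - \<phi>' (x, 0) = \<psi> (\<mu> x)"
  shows "crossed_module_iso brg (omega_bracket brh \<omega>) (ext_mu \<mu> \<phi>) (ext_action L)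
           brg (omega_bracket brh \<omega>') (ext_mu \<mu> \<phi>') (ext_action L)
           id (\<lambda>(y, t). (y, t - \<psi> y))"
proof -
  have "lie_iso brg brg id"
    by (simp add: lie_iso_def lie_hom_def linear_id)
  then show ?thesis
    using lie_iso_omega_bracket_shear[OF lin h\<omega>] h\<phi>
    by (simp add: crossed_module_iso_def ext_mu_def ext_action_eq algebra_simps)
qed

theorem mainTheorem16:
  fixes brg :: "'g::real_vector \<Rightarrow> 'g \<Rightarrow> 'g" and brh :: "'h::real_vector \<Rightarrow> 'h \<Rightarrow> 'h"
    and \<mu> :: "'g \<Rightarrow> 'h" and L :: "'h \<Rightarrow> 'g \<Rightarrow> 'g"
    and \<omega> \<omega>' :: "'h \<Rightarrow> 'h \<Rightarrow> real" and \<phi> \<phi>' :: "'g \<times> 'h \<Rightarrow> real" and \<psi> :: "'h \<Rightarrow> real"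
  assumes cm: "crossed_module brg brh \<mu> L"
    and c1: "cocycle brg brh \<mu> L \<omega> \<phi>"
    and c2: "cocycle brg brh \<mu> L \<omega>' \<phi>'"
    and \<psi>_lin: "linear \<psi>"
    and h\<omega>: "\<And>y0 y1. \<omega> y0 y1 - \<omega>' y0 y1 = - \<psi> (brh y0 y1)"
    and h\<phi>: "\<And>x y. \<phi> (x, y) - \<phi>' (x, y) = \<psi> (\<mu> x)"
  shows "crossed_module brg (omega_bracket brh \<omega>) (ext_mu \<mu> \<phi>) (ext_action L)
       \<and> crossed_module brg (omega_bracket brh \<omega>') (ext_mu \<mu> \<phi>') (ext_action L)
       \<and> crossed_module_iso brg (omega_bracket brh \<omega>) (ext_mu \<mu> \<phi>) (ext_action L)
           brg (omega_bracket brh \<omega>') (ext_mu \<mu> \<phi>') (ext_action L)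
           id (\<lambda>(y, t). (y, t - \<psi> y))
       \<and> (\<forall>t. (\<lambda>(y, t). (y, t - \<psi> y)) (0, t) = (0, t))
       \<and> (\<forall>y t. fst ((\<lambda>(y, t). (y, t - \<psi> y)) (y, t)) = y)"
  using crossed_module_induced_extension[OF cm c1] crossed_module_induced_extension[OF cm c2]
    crossed_module_iso_induced_extensions[of \<psi> \<omega> \<omega>' brh \<phi> \<phi>' \<mu>, OF \<psi>_lin h\<omega> h\<phi>] linear_0[OF \<psi>_lin]
  by simp

end
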